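(* Let $A\in B_\infty(L)$, let $\{e_j\}_{j\in\mathbb N}$ be a complete orthonormal system in $L$ and $M\in\mathbb N$. Then, in the sense of quadratic forms on $D_1$, \[ \sum_{j=1}^M a^\dagger(Ae_j)a(\bar A\bar e_j)\le\|A\|^2N . \]
   Context: $L$ is a separable complex Hilbert space with $\dim L=\infty$, scalar product antilinear in the first argument, and a conjugation $J: f\mapsto\bar f$ (antilinear involution with $(\bar f,\bar g)=(g,f)$); for bounded $A$, $\bar A:=JAJ$. $B_\infty(L)$ denotes the bounded operators on $L$, $\|A\|$ the operator norm. $\mathcal F$ carries a Fock representation of the CCR over $L$: on a dense invariant domain $D$ there are operators $a(f),a^\dagger(f)$, linear in $f$, with $[a(f),a(g)]=0=[a^\dagger(f),a^\dagger(g)]$, $[a(f),a^\dagger(g)]=(\bar f,g)\mathrm{id}$, $(a(f)\Phi,\Psi)=(\Phi,a^\dagger(\bar f)\Psi)$, a unit vacuum $\Omega$ with $a(f)\Omega=0$, and $\mathcal F$ is the closure of the span of all vectors $a^\dagger(f_n)\cdots a^\dagger(f_1)\Omega$. $\mathcal F^{(n)}$ is the closure of the span of such vectors with exactly $n$ creation operators; $\mathcal F=\bigoplus_n\mathcal F^{(n)}$, $\Phi^{(n)}$ the component in $\mathcal F^{(n)}$. $D_\alpha:=\{\Phi:\sum_n(n+1)^{2\alpha}\|\Phi^{(n)}\|^2<\infty\}$. The operators $a(f),a^\dagger(f)$ extend to $D_{1/2}$ (changing particle number by $\mp1$, with $\|a(f)\Phi\|,\|a^\dagger(f)\Phi\|\le\|f\|(\sum_n(n+1)\|\Phi^{(n)}\|^2)^{1/2}$);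 these extensions are used. $N$ is the number operator on $D_1$, $(N\Phi)^{(n)}=n\Phi^{(n)}$. For operators $S,T$ and a subspace $V$, $S\le T$ on $V$ means $(\Phi,S\Phi)\le(\Phi,T\Phi)$ for all $\Phi\in V$. *)

theory Defs
  imports "HOL-Analysis.Analysis" "HOL-Library.Complex_Order"
begin

text \<open>Complex pre-Hilbert spaces, scalar product antilinear in the first argument.
  The real structure (norm, topology) is that of the real inner product Re of the
  complex one; a Hilbert space is such a type that is additionally complete_space.\<close>

class complex_inner = real_inner +
  fixes cscale :: "complex \<Rightarrow> 'a \<Rightarrow> 'a"
    and cinner :: "'a \<Rightarrow> 'a \<Rightarrow> complex"
  assumes cscale_add_right: "cscale c (x + y) = cscale c x + cscale c y"
    and cscale_add_left: "cscale (c + d) x = cscale c x + cscale d x"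
    and cscale_cscale: "cscale c (cscale d x) = cscale (c * d) x"
    and cscale_one: "cscale 1 x = x"
    and scaleR_cscale: "scaleR r x = cscale (complex_of_real r) x"
    and cinner_cnj: "cinner x y = cnj (cinner y x)"
    and cinner_add_right: "cinner x (y + z) = cinner x y + cinner x z"
    and cinner_cscale_right: "cinner x (cscale c y) = c * cinner x y"
    and inner_cinner: "inner x y = Re (cinner x y)"

definition c_span :: "('a::complex_inner) set \<Rightarrow> 'a set" where
  "c_span S = {x. \<exists>(k::nat) c v. (\<forall>i<k. v i \<in> S) \<and> x = (\<Sum>i<k. cscale (c i) (v i))}"

definition clinear_on :: "('a::complex_inner) set \<Rightarrow> ('a \<Rightarrow> 'b::complex_inner) \<Rightarrow> bool" where
  "clinear_on S T \<longleftrightarrow> (\<forall>x\<in>S. \<forall>y\<in>S. T (x + y) = T x + T y) \<and>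
                       (\<forall>c. \<forall>x\<in>S. T (cscale c x) = cscale c (T x))"

definition bounded_clinear_op :: "('a::complex_inner \<Rightarrow> 'b::complex_inner) \<Rightarrow> bool" where
  "bounded_clinear_op T \<longleftrightarrow> clinear_on UNIV T \<and> (\<exists>K. \<forall>x. norm (T x) \<le> K * norm x)"

definition conjugation :: "('a::complex_inner \<Rightarrow> 'a) \<Rightarrow> bool" where
  "conjugation J \<longleftrightarrow> (\<forall>x y. J (x + y) = J x + J y) \<and> (\<forall>c x. J (cscale c x) = cscale (cnj c) (J x))
     \<and> (\<forall>x. J (J x) = x) \<and> (\<forall>f g. cinner (J f) (J g) = cinner g f)"

definition complete_ons :: "(nat \<Rightarrow> 'a::complex_inner) \<Rightarrow> bool" where
  "complete_ons e \<longleftrightarrow> (\<forall>i j. cinner (e i) (e j) = (if i = j then 1 else 0))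
     \<and> (\<forall>x. (\<forall>j. cinner (e j) x = 0) \<longrightarrow> x = 0)"

primrec fock_vec :: "('l \<Rightarrow> 'f \<Rightarrow> 'f) \<Rightarrow> 'f \<Rightarrow> 'l list \<Rightarrow> 'f" where
  "fock_vec ad vac [] = vac"
| "fock_vec ad vac (f # fs) = ad f (fock_vec ad vac fs)"

definition n_part :: "('l \<Rightarrow> 'f::complex_inner \<Rightarrow> 'f) \<Rightarrow> 'f \<Rightarrow> nat \<Rightarrow> 'f set" where
  "n_part ad vac n = closure (c_span {fock_vec ad vac fs | fs. length fs = n})"

definition fin_dom :: "('l \<Rightarrow> 'f::complex_inner \<Rightarrow> 'f) \<Rightarrow> 'f \<Rightarrow> 'f set" where
  "fin_dom ad vac = c_span (range (fock_vec ad vac))"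

text \<open>The component Phi^(n): orthogonal projection onto F^(n).\<close>
definition comp :: "('l \<Rightarrow> 'f::complex_inner \<Rightarrow> 'f) \<Rightarrow> 'f \<Rightarrow> nat \<Rightarrow> 'f \<Rightarrow> 'f" where
  "comp ad vac n x = (THE p. p \<in> n_part ad vac n \<and> (\<forall>y\<in>n_part ad vac n. cinner y (x - p) = 0))"

definition D_alpha :: "('l \<Rightarrow> 'f::complex_inner \<Rightarrow> 'f) \<Rightarrow> 'f \<Rightarrow> real \<Rightarrow> 'f set" where
  "D_alpha ad vac \<alpha> = {x. summable (\<lambda>n. (real n + 1) powr (2 * \<alpha>) * (norm (comp ad vac n x))\<^sup>2)}"

definition numop :: "('l \<Rightarrow> 'f::complex_inner \<Rightarrow> 'f) \<Rightarrow> 'f \<Rightarrow> 'f \<Rightarrow> 'f" where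
  "numop ad vac x = (\<Sum>n. cscale (of_nat n) (comp ad vac n x))"

text \<open>Fock representation of the CCR over L with conjugation J, where a, ad are the
  extensions of the annihilation / creation operators to D_{1/2}:
  on the finite-particle domain they satisfy the CCR, adjointness and vacuum
  conditions; on each F^(n) they are bounded complex linear (hence are the
  continuous extensions), and on D_{1/2} they act componentwise.\<close>
definition fock_rep :: "('l::complex_inner \<Rightarrow> 'l) \<Rightarrow> ('l \<Rightarrow> 'f::complex_inner \<Rightarrow> 'f)
    \<Rightarrow> ('l \<Rightarrow> 'f \<Rightarrow> 'f) \<Rightarrow> 'f \<Rightarrow> bool" where
  "fock_rep J a ad vac \<longleftrightarrow>
     (let D = fin_dom ad vac in
       norm vac = 1 \<and> (\<forall>f. a f vac = 0)
     \<and> closure D = UNIV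
     \<and> (\<forall>f. clinear_on D (a f) \<and> clinear_on D (ad f))
     \<and> (\<forall>f g x. x \<in> D \<longrightarrow> a (f + g) x = a f x + a g x \<and> ad (f + g) x = ad f x + ad g x)
     \<and> (\<forall>c f x. x \<in> D \<longrightarrow> a (cscale c f) x = cscale c (a f x) \<and> ad (cscale c f) x = cscale c (ad f x))
     \<and> (\<forall>f g x. x \<in> D \<longrightarrow> a f (a g x) = a g (a f x))
     \<and> (\<forall>f g x. x \<in> D \<longrightarrow> ad f (ad g x) = ad g (ad f x))
     \<and> (\<forall>f g x. x \<in> D \<longrightarrow> a f (ad g x) - ad g (a f x) = cscale (cinner (J f) g) x)
     \<and> (\<forall>f x y. x \<in> D \<longrightarrow> y \<in> D \<longrightarrow> cinner (a f x) y = cinner x (ad (J f) y))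
     \<and> (\<forall>f n. clinear_on (n_part ad vac n) (a f) \<and> clinear_on (n_part ad vac n) (ad f)
            \<and> (\<exists>K. \<forall>x\<in>n_part ad vac n. norm (a f x) \<le> K * norm x \<and> norm (ad f x) \<le> K * norm x))
     \<and> (\<forall>f x. x \<in> D_alpha ad vac (1/2) \<longrightarrow>
            (\<lambda>n. a f (comp ad vac n x)) sums (a f x) \<and> (\<lambda>n. ad f (comp ad vac n x)) sums (ad f x)))"

end

theory Submission
  imports Defs
begin

text \<open>
  Let \<Psi> be an n-particle vector built from finitely many one-particle vectors and let
  w_1, ..., w_p be an orthonormal basis of their span. On such vectors
  \<Sum>_k a\<dagger>(w_k) a(J w_k) acts as n times the identity, so the vectors
  y_k = a(J w_k) \<Psi> satisfy \<Sum>_k \<parallel>y_k\<parallel>^2 = n \<parallel>\<Psi>\<parallel>^2, and the CCR give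
  a(h) \<Psi> = \<Sum>_k \<langle>J w_k, h\<rangle> y_k. The vectors J A e_j satisfy Bessel's inequality with
  constant \<parallel>A\<parallel>^2; expanding the y_k in an orthonormal basis of their own span turns this
  scalar inequality into \<Sum>_j \<parallel>a(J A e_j) \<Psi>\<parallel>^2 \<le> \<parallel>A\<parallel>^2 n \<parallel>\<Psi>\<parallel>^2. The estimate extends to
  the closed n-particle space by continuity, and the theorem follows by summing over n, because
  \<langle>\<Phi>, a\<dagger>(g) a(J g) \<Phi>\<rangle> = \<Sum>_n \<parallel>a(J g) \<Phi>^(n+1)\<parallel>^2 and \<langle>\<Phi>, N \<Phi>\<rangle> = \<Sum>_n n \<parallel>\<Phi>^(n)\<parallel>^2.
\<close>

section \<open>Complex inner product spaces\<close>

lemma cinner_add_left: "cinner (x + y) z = cinner x z + cinner y z"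
  by (metis cinner_add_right cinner_cnj complex_cnj_add)

lemma cinner_cscale_left: "cinner (cscale c x) y = cnj c * cinner x y"
  by (metis cinner_cnj cinner_cscale_right complex_cnj_cnj complex_cnj_mult)

lemma cinner_zero_right [simp]: "cinner x 0 = 0"
  by (metis add_cancel_right_right add_0 cinner_add_right)

lemma cinner_zero_left [simp]: "cinner 0 x = 0"
  by (metis cinner_cnj cinner_zero_right complex_cnj_zero)

lemma cinner_diff_right: "cinner x (y - z) = cinner x y - cinner x z"
  by (metis add_diff_cancel cinner_add_right diff_add_cancel eq_diff_eq)

lemma cinner_sum_right: "cinner x (sum f A) = (\<Sum>i\<in>A. cinner x (f i))"
  by (induction A rule: infinite_finite_induct) (auto simp: cinner_add_right)

lemma cinner_sum_left: "cinner (sum f A) x = (\<Sum>i\<in>A. cinner (f i) x)"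
  by (induction A rule: infinite_finite_induct) (auto simp: cinner_add_left)

lemma cinner_eq_zero_sym: "cinner x y = 0 \<longleftrightarrow> cinner y x = 0"
  by (metis cinner_cnj complex_cnj_zero_iff)

lemma cscale_zero_left [simp]: "cscale 0 x = 0"
  by (metis add_cancel_right_right add_0 cscale_add_left)

lemma cscale_zero_right [simp]: "cscale c 0 = 0"
  by (metis add_cancel_right_right add_0 cscale_add_right)

lemma cscale_sum_right: "cscale c (sum f A) = (\<Sum>i\<in>A. cscale c (f i))"
  by (induction A rule: infinite_finite_induct) (auto simp: cscale_add_right)

lemma cscale_sum_left: "cscale (sum f A) x = (\<Sum>i\<in>A. cscale (f i) x)"
  by (induction A rule: infinite_finite_induct) (auto simp: cscale_add_left)

lemma cinner_self: "cinner x x = complex_of_real ((norm x)\<^sup>2)"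
proof -
  have "Im (cinner x x) = 0"
    using cinner_cnj[of x x] by (metis cnj.simps(2) neg_equal_zero)
  moreover have "Re (cinner x x) = (norm x)\<^sup>2"
    by (simp add: inner_cinner[symmetric] power2_norm_eq_inner)
  ultimately show ?thesis by (simp add: complex_eq_iff)
qed

lemma norm_cscale: "norm (cscale c x) = cmod c * norm x"
proof -
  have "(norm (cscale c x))\<^sup>2 = Re (cinner (cscale c x) (cscale c x))"
    by (simp add: cinner_self)
  also have "cinner (cscale c x) (cscale c x) = cnj c * c * cinner x x"
    by (simp add: cinner_cscale_left cinner_cscale_right mult.assoc)
  also have "cnj c * c * cinner x x = complex_of_real ((cmod c)\<^sup>2 * (norm x)\<^sup>2)"
    by (simp add: cinner_self mult.commute complex_norm_square[of c, symmetric] of_real_power)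
  finally show ?thesis by (simp add: power2_eq_iff_nonneg flip: power_mult_distrib)
qed

lemma cauchy_schwarz_cinner: "cmod (cinner x y) \<le> norm x * norm y"
proof (cases "cinner x y = 0")
  case False
  define c where "c = cinner x y / cmod (cinner x y)"
  have "cnj c * cinner x y = cinner x y * cnj (cinner x y) / complex_of_real (cmod (cinner x y))"
    by (simp add: c_def field_simps)
  also have "\<dots> = complex_of_real (cmod (cinner x y))"
    using False by (simp add: power2_eq_square flip: complex_norm_square)
  finally have "cmod (cinner x y) = inner (cscale c x) y"
    by (simp add: inner_cinner cinner_cscale_left)
  also have "\<dots> \<le> norm (cscale c x) * norm y" by (rule norm_cauchy_schwarz)
  also have "\<dots> = norm x * norm y" using False by (simp add: norm_cscale c_def norm_divide)
  finally show ?thesis .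
qed simp

lemma bounded_linear_cinner_right: "bounded_linear (\<lambda>x. cinner z x)"
proof (rule bounded_linear_intro[where K = "norm z"])
  show "cinner z (scaleR r x) = scaleR r (cinner z x)" for r x
    by (simp add: scaleR_cscale cinner_cscale_right scaleR_conv_of_real)
  show "norm (cinner z x) \<le> norm x * norm z" for x
    using cauchy_schwarz_cinner[of z x] by (simp add: mult.commute)
qed (rule cinner_add_right)

lemma bounded_linear_cinner_left: "bounded_linear (\<lambda>x. cinner x z)"
proof (rule bounded_linear_intro[where K = "norm z"])
  show "cinner (scaleR r x) z = scaleR r (cinner x z)" for r x
    by (simp add: scaleR_cscale cinner_cscale_left scaleR_conv_of_real)
  show "norm (cinner x z) \<le> norm x * norm z" for x
    using cauchy_schwarz_cinner[of x z] by simp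
qed (rule cinner_add_left)

lemma bounded_linear_cscale: "bounded_linear (cscale c)"
proof (rule bounded_linear_intro[where K = "cmod c"])
  show "cscale c (scaleR r x) = scaleR r (cscale c x)" for r x
    by (simp add: scaleR_cscale cscale_cscale mult.commute)
  show "norm (cscale c x) \<le> norm x * cmod c" for x
    by (simp add: norm_cscale mult.commute)
qed (rule cscale_add_right)

lemmas sums_cinner_right = bounded_linear.sums[OF bounded_linear_cinner_right]
lemmas tendsto_cscale = bounded_linear.tendsto[OF bounded_linear_cscale]

lemma sums_complex_of_real:
  assumes "(\<lambda>n. complex_of_real (f n)) sums c"
  shows "f sums Re c" "c = complex_of_real (Re c)"
proof -
  show "f sums Re c" using sums_Re[OF assms] by simp
  have "(\<lambda>n. 0) sums Im c" using sums_Im[OF assms] by simp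
  then have "Im c = 0" using sums_zero sums_unique2 by blast
  then show "c = complex_of_real (Re c)" by (simp add: complex_eq_iff)
qed

section \<open>Complex subspaces and complex-linear maps\<close>

definition csubspace :: "'a::complex_inner set \<Rightarrow> bool" where
  "csubspace S \<longleftrightarrow> 0 \<in> S \<and> (\<forall>x\<in>S. \<forall>y\<in>S. x + y \<in> S) \<and> (\<forall>c. \<forall>x\<in>S. cscale c x \<in> S)"

lemma csubspace_0: "csubspace S \<Longrightarrow> 0 \<in> S"
  and csubspace_add: "csubspace S \<Longrightarrow> x \<in> S \<Longrightarrow> y \<in> S \<Longrightarrow> x + y \<in> S"
  and csubspace_cscale: "csubspace S \<Longrightarrow> x \<in> S \<Longrightarrow> cscale c x \<in> S"
  by (simp_all add: csubspace_def)

lemma csubspace_imp_subspace: "csubspace S \<Longrightarrow> subspace S"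
  by (simp add: csubspace_def subspace_def scaleR_cscale)

lemma csubspace_diff: "csubspace S \<Longrightarrow> x \<in> S \<Longrightarrow> y \<in> S \<Longrightarrow> x - y \<in> S"
  by (simp add: csubspace_imp_subspace subspace_diff)

lemma csubspace_sum: "csubspace S \<Longrightarrow> (\<And>i. i \<in> A \<Longrightarrow> f i \<in> S) \<Longrightarrow> sum f A \<in> S"
  by (simp add: csubspace_imp_subspace subspace_sum)

lemma csubspace_closure:
  assumes "csubspace S" shows "csubspace (closure S)"
  unfolding csubspace_def
proof (intro conjI ballI allI)
  show "0 \<in> closure S" using assms csubspace_0 closure_subset by blast
next
  fix x y assume "x \<in> closure S" "y \<in> closure S"
  then obtain f g where "\<forall>n. f n \<in> S" "f \<longlonglongrightarrow> x" "\<forall>n. g n \<in> S" "g \<longlonglongrightarrow> y"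
    unfolding closure_sequential by blast
  then show "x + y \<in> closure S" unfolding closure_sequential
    by (intro exI[of _ "\<lambda>n. f n + g n"]) (auto intro: tendsto_add csubspace_add[OF assms])
next
  fix c x assume "x \<in> closure S"
  then obtain f where "\<forall>n. f n \<in> S" "f \<longlonglongrightarrow> x"
    unfolding closure_sequential by blast
  then show "cscale c x \<in> closure S" unfolding closure_sequential
    by (intro exI[of _ "\<lambda>n. cscale c (f n)"]) (auto intro: tendsto_cscale csubspace_cscale[OF assms])
qed

lemma c_span_sum: "(\<And>i. i < (k::nat) \<Longrightarrow> v i \<in> S) \<Longrightarrow> (\<Sum>i<k. cscale (c i) (v i)) \<in> c_span S"
  unfolding c_span_def by (intro CollectI exI conjI) auto

lemma c_span_superset: "x \<in> S \<Longrightarrow> x \<in> c_span S"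
  using c_span_sum[of "Suc 0" "\<lambda>_. x" S "\<lambda>_. 1"] by (simp add: cscale_one)

lemma c_span_induct [consumes 1, case_names zero add cscale]:
  assumes "x \<in> c_span S" "P 0" "\<And>x y. P x \<Longrightarrow> P y \<Longrightarrow> P (x + y)"
    "\<And>c v. v \<in> S \<Longrightarrow> P (cscale c v)"
  shows "P x"
proof -
  from assms(1) obtain k c v where "\<forall>i<(k::nat). v i \<in> S" "x = (\<Sum>i<k. cscale (c i) (v i))"
    unfolding c_span_def by auto
  moreover have "P (\<Sum>i<k'. cscale (c i) (v i))" if "\<forall>i<k. v i \<in> S" "k' \<le> k" for k'
    using that by (induction k') (auto simp: assms(2-4))
  ultimately show ?thesis by simp
qed

lemma c_span_minimal: "csubspace T \<Longrightarrow> S \<subseteq> T \<Longrightarrow> c_span S \<subseteq> T"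
  unfolding c_span_def by (auto intro!: csubspace_sum csubspace_cscale)

lemma sum_lessThan_add: "(\<Sum>i<k1 + (k2::nat). f i) = (\<Sum>i<k1. f i) + (\<Sum>i<k2. f (k1 + i))"
  by (induction k2) (simp_all add: add.assoc)

lemma csubspace_c_span: "csubspace (c_span S)"
  unfolding csubspace_def
proof (intro conjI ballI allI)
  show "0 \<in> c_span S" using c_span_sum[of 0 "\<lambda>_. 0" S "\<lambda>_. 0"] by simp
next
  fix x y assume "x \<in> c_span S" "y \<in> c_span S"
  then obtain k1 c1 v1 k2 c2 v2
    where 1: "\<forall>i<(k1::nat). v1 i \<in> S" "x = (\<Sum>i<k1. cscale (c1 i) (v1 i))"
      and 2: "\<forall>i<(k2::nat). v2 i \<in> S" "y = (\<Sum>i<k2. cscale (c2 i) (v2 i))"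
    unfolding c_span_def by blast
  define c where "c i = (if i < k1 then c1 i else c2 (i - k1))" for i
  define v where "v i = (if i < k1 then v1 i else v2 (i - k1))" for i
  have "(\<Sum>i<k1 + k2. cscale (c i) (v i)) = x + y"
    by (simp add: 1 2 c_def v_def sum_lessThan_add)
  moreover have "\<forall>i<k1 + k2. v i \<in> S" using 1 2 by (auto simp: v_def)
  ultimately show "x + y \<in> c_span S" using c_span_sum by metis
next
  fix d x assume "x \<in> c_span S"
  then obtain k c v where "\<forall>i<(k::nat). v i \<in> S" "x = (\<Sum>i<k. cscale (c i) (v i))"
    unfolding c_span_def by blast
  then show "cscale d x \<in> c_span S"
    using c_span_sum[of k v S "\<lambda>i. d * c i"] by (simp add: cscale_sum_right cscale_cscale)
qed

lemma c_span_mono: "S \<subseteq> T \<Longrightarrow> c_span S \<subseteq> c_span T"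
  by (meson c_span_minimal c_span_superset csubspace_c_span subset_iff)

lemma clinear_on_add: "clinear_on V T \<Longrightarrow> x \<in> V \<Longrightarrow> y \<in> V \<Longrightarrow> T (x + y) = T x + T y"
  and clinear_on_cscale: "clinear_on V T \<Longrightarrow> x \<in> V \<Longrightarrow> T (cscale c x) = cscale c (T x)"
  unfolding clinear_on_def by blast+

lemma clinear_on_0: "clinear_on V T \<Longrightarrow> 0 \<in> V \<Longrightarrow> T 0 = 0"
  using clinear_on_cscale[of V T 0 0] by simp

lemma clinear_on_diff:
  assumes "clinear_on V T" "csubspace V" "x \<in> V" "y \<in> V"
  shows "T (x - y) = T x - T y"
  using clinear_on_add[OF assms(1) csubspace_diff[OF assms(2-4)] assms(4)] by simp

lemma clinear_on_sum:
  assumes "clinear_on V T" "csubspace V" "\<And>i. i \<in> A \<Longrightarrow> f i \<in> V"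
  shows "T (sum f A) = (\<Sum>i\<in>A. T (f i))"
  using assms(3)
proof (induction A rule: infinite_finite_induct)
  case (insert x F)
  then show ?case by (simp add: clinear_on_add[OF assms(1)] csubspace_sum[OF assms(2)])
qed (simp_all add: clinear_on_0[OF assms(1) csubspace_0[OF assms(2)]])

lemma clinear_on_c_span_into:
  assumes "clinear_on D T" "csubspace D" "X \<subseteq> D" "T ` X \<subseteq> W" "csubspace W" "x \<in> c_span X"
  shows "T x \<in> W"
proof -
  from assms(6) have "x \<in> D \<and> T x \<in> W"
  proof (induction rule: c_span_induct)
    case zero show ?case using assms(1,2,5) clinear_on_0 csubspace_0 by metis
  next
    case (add x y) then show ?case using assms(1,2,5) by (simp add: csubspace_add clinear_on_add)
  next
    case (cscale c v)
    then have "v \<in> D" "T v \<in> W" using assms(3,4) by auto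
    then show ?case using assms(1,2,5) by (simp add: csubspace_cscale clinear_on_cscale)
  qed
  then show ?thesis ..
qed

lemma clinear_on_bounded_continuous_on:
  assumes "clinear_on V T" "csubspace V" "\<forall>x\<in>V. norm (T x) \<le> K * norm x"
  shows "continuous_on V T"
proof (rule lipschitz_on_continuous_on[OF lipschitz_onI])
  fix x y assume "x \<in> V" "y \<in> V"
  then have "dist (T x) (T y) \<le> K * dist x y"
    using assms by (simp add: dist_norm clinear_on_diff[symmetric] csubspace_diff)
  then show "dist (T x) (T y) \<le> \<bar>K\<bar> * dist x y"
    by (smt (verit) mult_right_mono zero_le_dist)
qed simp

lemma bounded_clinear_op_imp_bounded_linear:
  assumes "bounded_clinear_op A" shows "bounded_linear A"
proof -
  obtain K where K: "\<And>x. norm (A x) \<le> K * norm x" and lin: "clinear_on UNIV A"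
    using assms unfolding bounded_clinear_op_def by blast
  show ?thesis
  proof (rule bounded_linear_intro[where K = K])
    show "A (x + y) = A x + A y" for x y using lin by (simp add: clinear_on_def)
    show "A (scaleR r x) = scaleR r (A x)" for r x using lin by (simp add: clinear_on_def scaleR_cscale)
    show "norm (A x) \<le> norm x * K" for x using K[of x] by (simp add: mult.commute)
  qed
qed

section \<open>Orthogonal projection onto a closed subspace\<close>

lemma Cauchy_if_dist_sq_le_null:
  fixes v :: "nat \<Rightarrow> 'a::metric_space"
  assumes "s \<longlonglongrightarrow> 0" "\<And>m n. (dist (v m) (v n))\<^sup>2 \<le> s m + s n"
  shows "Cauchy v"
proof (rule metric_CauchyI)
  fix e :: real assume "e > 0"
  then have "\<forall>\<^sub>F n in sequentially. s n < e\<^sup>2 / 2"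
    using assms(1) by (intro order_tendstoD) auto
  then obtain M where M: "\<And>n. n \<ge> M \<Longrightarrow> s n < e\<^sup>2 / 2"
    by (auto simp: eventually_sequentially)
  show "\<exists>M. \<forall>m\<ge>M. \<forall>n\<ge>M. dist (v m) (v n) < e"
  proof (intro exI allI impI)
    fix m n assume "m \<ge> M" "n \<ge> M"
    then have "(dist (v m) (v n))\<^sup>2 < e\<^sup>2" using assms(2)[of m n] M[of m] M[of n] by linarith
    then show "dist (v m) (v n) < e" using \<open>e > 0\<close> by (simp add: power_less_imp_less_base)
  qed
qed

lemma apollonius_dist:
  fixes x a b :: "'a::real_inner"
  shows "(dist a b)\<^sup>2 = 2 * (dist x a)\<^sup>2 + 2 * (dist x b)\<^sup>2 - 4 * (dist x (midpoint a b))\<^sup>2"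
  unfolding dist_norm power2_norm_eq_inner midpoint_def
  by (simp add: inner_diff_left inner_diff_right inner_add_left inner_add_right inner_commute
      algebra_simps)

text \<open>A minimizing sequence is Cauchy by Apollonius' identity.\<close>

lemma closest_point_exists_complete:
  fixes x :: "'a::{real_inner,complete_space}"
  assumes "convex S" "closed S" "S \<noteq> {}"
  obtains p where "p \<in> S" "\<forall>y\<in>S. dist x p \<le> dist x y"
proof -
  define d where "d = Inf ((\<lambda>v. (dist x v)\<^sup>2) ` S)"
  have d_le: "d \<le> (dist x v)\<^sup>2" if "v \<in> S" for v
    unfolding d_def using that by (intro cInf_lower bdd_belowI[of _ 0]) auto
  have "\<exists>v\<in>S. (dist x v)\<^sup>2 < d + inverse (real (Suc n))" for n
    using cInf_lessD[of "(\<lambda>v. (dist x v)\<^sup>2) ` S" "d + inverse (real (Suc n))"] assms(3)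
    by (auto simp: d_def)
  then obtain v where v: "\<And>n. v n \<in> S" "\<And>n. (dist x (v n))\<^sup>2 < d + inverse (real (Suc n))"
    by metis
  have "(dist (v m) (v n))\<^sup>2 \<le> 2 * inverse (real (Suc m)) + 2 * inverse (real (Suc n))" for m n
  proof -
    have "midpoint (v m) (v n) \<in> S"
      using assms(1) v(1) midpoint_in_closed_segment convex_contains_segment by blast
    then have "d \<le> (dist x (midpoint (v m) (v n)))\<^sup>2" by (rule d_le)
    then show ?thesis using apollonius_dist[of "v m" "v n" x] v(2)[of m] v(2)[of n] by linarith
  qed
  moreover have "(\<lambda>n. 2 * inverse (real (Suc n))) \<longlonglongrightarrow> 0"
    using tendsto_mult_right_zero[OF LIMSEQ_inverse_real_of_nat] .
  ultimately obtain p where p: "v \<longlonglongrightarrow> p"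
    using Cauchy_if_dist_sq_le_null Cauchy_convergent_iff convergent_def by blast
  have "(\<lambda>n. (dist x (v n))\<^sup>2) \<longlonglongrightarrow> (dist x p)\<^sup>2" by (intro tendsto_intros p)
  moreover have "(\<lambda>n. (dist x (v n))\<^sup>2) \<longlonglongrightarrow> d"
    by (rule real_tendsto_sandwich[OF _ _ tendsto_const LIMSEQ_inverse_real_of_nat_add])
       (use d_le v in \<open>auto intro!: always_eventually less_imp_le\<close>)
  ultimately have "(dist x p)\<^sup>2 = d" by (rule LIMSEQ_unique)
  then show thesis
    using that[of p] d_le closed_sequentially[OF assms(2) v(1) p] by (simp add: power2_le_imp_le)
qed

lemma orthogonal_projection_exists:
  fixes x :: "'a::{complex_inner,complete_space}"
  assumes "csubspace V" "closed V"
  obtains p where "p \<in> V" "\<forall>y\<in>V. cinner y (x - p) = 0"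
proof -
  have V: "subspace V" "convex V" using assms(1) csubspace_imp_subspace subspace_imp_convex by auto
  obtain p where p: "p \<in> V" "\<forall>y\<in>V. dist x p \<le> dist x y"
    using closest_point_exists_complete[OF V(2) assms(2)] csubspace_0[OF assms(1)] by blast
  have real_orth: "inner y (x - p) = 0" if "y \<in> V" for y
    using any_closest_point_dot[OF V(2) assms(2) p(1) _ p(2), of "p + y"]
      any_closest_point_dot[OF V(2) assms(2) p(1) _ p(2), of "p - y"]
      subspace_add[OF V(1) p(1) that] subspace_diff[OF V(1) p(1) that]
    by (simp add: inner_commute)
  have "cinner y (x - p) = 0" if "y \<in> V" for y
  proof -
    have "Re (cinner y (x - p)) = 0" "Re (cinner (cscale \<i> y) (x - p)) = 0"
      using real_orth that csubspace_cscale[OF assms(1) that] by (simp_all add: inner_cinner)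
    then show ?thesis by (simp add: cinner_cscale_left complex_eq_iff)
  qed
  with p(1) that show thesis by blast
qed

lemma orthogonal_projection_ex1:
  fixes x :: "'a::{complex_inner,complete_space}"
  assumes "csubspace V" "closed V"
  shows "\<exists>!p. p \<in> V \<and> (\<forall>y\<in>V. cinner y (x - p) = 0)"
proof (rule ex_ex1I)
  show "\<exists>p. p \<in> V \<and> (\<forall>y\<in>V. cinner y (x - p) = 0)"
    using orthogonal_projection_exists[OF assms] by metis
next
  fix p q assume p: "p \<in> V \<and> (\<forall>y\<in>V. cinner y (x - p) = 0)"
    and q: "q \<in> V \<and> (\<forall>y\<in>V. cinner y (x - q) = 0)"
  then have "cinner (p - q) (p - q) = cinner (p - q) (x - q) - cinner (p - q) (x - p)"
    by (simp add: cinner_diff_right)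
  also have "\<dots> = 0" using p q csubspace_diff[OF assms(1)] by simp
  finally show "p = q" by (simp add: cinner_self)
qed

section \<open>Orthonormal families\<close>

definition orthonormal :: "(nat \<Rightarrow> 'a::complex_inner) \<Rightarrow> nat set \<Rightarrow> bool" where
  "orthonormal z I \<longleftrightarrow> (\<forall>i\<in>I. \<forall>j\<in>I. cinner (z i) (z j) = (if i = j then 1 else 0))"

definition fourier_sum :: "(nat \<Rightarrow> 'a::complex_inner) \<Rightarrow> nat \<Rightarrow> 'a \<Rightarrow> 'a" where
  "fourier_sum z p v = (\<Sum>i<p. cscale (cinner (z i) v) (z i))"

definition fourier_span :: "(nat \<Rightarrow> 'a::complex_inner) \<Rightarrow> nat \<Rightarrow> 'a set" where
  "fourier_span z p = {v. fourier_sum z p v = v}"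

lemma orthonormal_cinner_sum:
  assumes "orthonormal z I" "finite I" "j \<in> I"
  shows "cinner (z j) (\<Sum>i\<in>I. cscale (c i) (z i)) = c j"
proof -
  have "cinner (z j) (\<Sum>i\<in>I. cscale (c i) (z i)) = (\<Sum>i\<in>I. if i = j then c i else 0)"
    using assms(1,3) unfolding orthonormal_def
    by (auto simp: cinner_sum_right cinner_cscale_right intro!: sum.cong)
  then show ?thesis using assms(2,3) by simp
qed

lemma norm_sum_orthonormal:
  assumes "orthonormal z I" "finite I"
  shows "(norm (\<Sum>i\<in>I. cscale (c i) (z i)))\<^sup>2 = (\<Sum>i\<in>I. (cmod (c i))\<^sup>2)"
proof -
  have "cinner (\<Sum>i\<in>I. cscale (c i) (z i)) (\<Sum>i\<in>I. cscale (c i) (z i)) = (\<Sum>i\<in>I. cnj (c i) * c i)"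
    using orthonormal_cinner_sum[OF assms] by (simp add: cinner_sum_left cinner_cscale_left)
  also have "\<dots> = complex_of_real (\<Sum>i\<in>I. (cmod (c i))\<^sup>2)"
    unfolding of_real_sum by (intro sum.cong refl) (metis complex_norm_square mult.commute of_real_power)
  finally show ?thesis unfolding cinner_self of_real_eq_iff .
qed

lemma orthonormal_fun_upd:
  assumes "orthonormal z {..<p}" "\<forall>i<p. cinner (z i) e = 0" "norm e = 1"
  shows "orthonormal (z(p := e)) {..<Suc p}"
  unfolding orthonormal_def
proof (intro ballI)
  fix i j assume "i \<in> {..<Suc p}" "j \<in> {..<Suc p}"
  then consider "i < p" "j < p" | "i = p" "j < p" | "i < p" "j = p" | "i = p" "j = p"
    by fastforce
  then show "cinner ((z(p := e)) i) ((z(p := e)) j) = (if i = j then 1 else 0)"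
    using assms by cases (auto simp: orthonormal_def cinner_self cinner_eq_zero_sym[of e])
qed

lemma cinner_fourier_remainder:
  assumes "orthonormal z {..<p}" "j < p"
  shows "cinner (z j) (v - fourier_sum z p v) = 0"
  using orthonormal_cinner_sum[OF assms(1) _ , of j "\<lambda>i. cinner (z i) v"] assms(2)
  by (simp add: fourier_sum_def cinner_diff_right)

lemma fourier_span_extend:
  assumes z: "orthonormal z {..<p}" and v: "v \<notin> fourier_span z p"
  obtains e where "orthonormal (z(p := e)) {..<Suc p}"
    "insert v (fourier_span z p) \<subseteq> fourier_span (z(p := e)) (Suc p)"
proof -
  define r where "r = v - fourier_sum z p v"
  have r: "r \<noteq> 0" using v by (simp add: r_def fourier_span_def)
  define e where "e = cscale (complex_of_real (1 / norm r)) r"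
  have "\<forall>i<p. cinner (z i) r = 0" using cinner_fourier_remainder[OF z] by (simp add: r_def)
  then have e: "norm e = 1" "\<forall>i<p. cinner (z i) e = 0"
    using r by (simp_all add: e_def norm_cscale cinner_cscale_right norm_divide)
  have e_orth: "cinner e (fourier_sum z p u) = 0" for u
    unfolding fourier_sum_def cinner_sum_right cinner_cscale_right
    using e(2) cinner_eq_zero_sym by (intro sum.neutral) auto
  have fourier_Suc: "fourier_sum (z(p := e)) (Suc p) u = fourier_sum z p u + cscale (cinner e u) e"
    for u
    unfolding fourier_sum_def by (auto intro: sum.cong)
  have "cscale (cinner e v) e = r"
  proof -
    have "cinner e v = cinner e r"
      using e_orth[of v] by (simp add: r_def cinner_diff_right)
    also have "\<dots> = complex_of_real (norm r)"
      using r by (simp add: e_def cinner_cscale_left cinner_self power2_eq_square)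
    finally show ?thesis
      using r by (simp add: e_def cscale_cscale cscale_one flip: of_real_mult)
  qed
  moreover have "cinner e u = 0" if "u \<in> fourier_span z p" for u
    using e_orth[of u] that by (simp add: fourier_span_def)
  ultimately have "insert v (fourier_span z p) \<subseteq> fourier_span (z(p := e)) (Suc p)"
    by (auto simp: fourier_span_def fourier_Suc r_def)
  with orthonormal_fun_upd[OF z e(2) e(1)] that show thesis by blast
qed

lemma gram_schmidt:
  fixes vs :: "'a::complex_inner list"
  shows "\<exists>p z. orthonormal z {..<p} \<and> set vs \<subseteq> fourier_span z p"
proof (induction vs)
  case Nil
  show ?case by (rule exI[of _ 0]) (simp add: orthonormal_def)
next
  case (Cons v vs)
  then obtain p z where z: "orthonormal z {..<p}" and vs: "set vs \<subseteq> fourier_span z p"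
    by blast
  show ?case
  proof (cases "v \<in> fourier_span z p")
    case True
    with z vs show ?thesis by auto
  next
    case False
    then obtain e where e: "orthonormal (z(p := e)) {..<Suc p}"
      and span: "insert v (fourier_span z p) \<subseteq> fourier_span (z(p := e)) (Suc p)"
      by (rule fourier_span_extend[OF z])
    have "set (v # vs) \<subseteq> fourier_span (z(p := e)) (Suc p)" using span vs by auto
    with e show ?thesis by blast
  qed
qed

text \<open>Expanding the y_k in an orthonormal basis of their span reduces this to the scalar
  bound, applied to each coordinate separately.\<close>

lemma sum_norm_combination_le:
  fixes y :: "nat \<Rightarrow> 'a::complex_inner" and c :: "'j \<Rightarrow> nat \<Rightarrow> complex"
  assumes bound: "\<And>\<beta>. (\<Sum>j\<in>T. (cmod (\<Sum>k<p. c j k * \<beta> k))\<^sup>2) \<le> lam * (\<Sum>k<p. (cmod (\<beta> k))\<^sup>2)"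
  shows "(\<Sum>j\<in>T. (norm (\<Sum>k<p. cscale (c j k) (y k)))\<^sup>2) \<le> lam * (\<Sum>k<p. (norm (y k))\<^sup>2)"
proof -
  obtain q z where z: "orthonormal z {..<q}"
    and exp: "set (map y [0..<p]) \<subseteq> fourier_span z q"
    using gram_schmidt by blast
  define \<beta> where "\<beta> m k = cinner (z m) (y k)" for m k
  have y_exp: "y k = (\<Sum>m<q. cscale (\<beta> m k) (z m))" if "k < p" for k
  proof -
    have "y k \<in> fourier_span z q" using exp that by auto
    then show ?thesis by (simp add: \<beta>_def fourier_sum_def fourier_span_def)
  qed
  have comb: "(\<Sum>k<p. cscale (c j k) (y k)) = (\<Sum>m<q. cscale (\<Sum>k<p. c j k * \<beta> m k) (z m))" for j
  proof -
    have "(\<Sum>k<p. cscale (c j k) (y k)) = (\<Sum>k<p. \<Sum>m<q. cscale (c j k * \<beta> m k) (z m))"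
      by (intro sum.cong refl) (simp add: y_exp cscale_sum_right cscale_cscale)
    also have "\<dots> = (\<Sum>m<q. cscale (\<Sum>k<p. c j k * \<beta> m k) (z m))"
      by (subst sum.swap) (simp add: cscale_sum_left)
    finally show ?thesis .
  qed
  have "(\<Sum>j\<in>T. (norm (\<Sum>k<p. cscale (c j k) (y k)))\<^sup>2)
      = (\<Sum>m<q. \<Sum>j\<in>T. (cmod (\<Sum>k<p. c j k * \<beta> m k))\<^sup>2)"
    by (simp add: comb norm_sum_orthonormal[OF z] sum.swap[of _ T])
  also have "\<dots> \<le> (\<Sum>m<q. lam * (\<Sum>k<p. (cmod (\<beta> m k))\<^sup>2))"
    by (intro sum_mono bound)
  also have "\<dots> = lam * (\<Sum>k<p. \<Sum>m<q. (cmod (\<beta> m k))\<^sup>2)"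
    by (simp add: sum_distrib_left sum.swap[of _ "{..<q}"])
  also have "\<dots> = lam * (\<Sum>k<p. (norm (y k))\<^sup>2)"
    using norm_sum_orthonormal[OF z] y_exp by (intro sum.cong refl arg_cong[where f = "(*) lam"]) simp
  finally show ?thesis .
qed

lemma bessel_bounded_clinear_op:
  fixes A :: "'a::complex_inner \<Rightarrow> 'b::complex_inner"
  assumes A: "bounded_clinear_op A" and e: "orthonormal e I" "finite I"
  shows "(\<Sum>j\<in>I. (cmod (cinner \<eta> (A (e j))))\<^sup>2) \<le> (onorm A)\<^sup>2 * (norm \<eta>)\<^sup>2"
proof -
  define t where "t j = cinner (A (e j)) \<eta>" for j
  define S where "S = (\<Sum>j\<in>I. (cmod (t j))\<^sup>2)"
  define u where "u = (\<Sum>j\<in>I. cscale (t j) (e j))"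
  have lin: "clinear_on UNIV A" using A by (simp add: bounded_clinear_op_def)
  have S_nonneg: "S \<ge> 0" by (simp add: S_def sum_nonneg)
  have "cinner (A u) \<eta> = (\<Sum>j\<in>I. cnj (t j) * t j)"
    unfolding u_def
    by (simp add: clinear_on_sum[OF lin] clinear_on_cscale[OF lin] csubspace_def cinner_sum_left
        cinner_cscale_left t_def)
  also have "\<dots> = complex_of_real S"
    unfolding S_def of_real_sum by (intro sum.cong refl) (metis complex_norm_square mult.commute of_real_power)
  finally have "S = cmod (cinner (A u) \<eta>)" using S_nonneg by simp
  also have "\<dots> \<le> norm (A u) * norm \<eta>" by (rule cauchy_schwarz_cinner)
  also have "\<dots> \<le> onorm A * norm u * norm \<eta>"
    by (rule mult_right_mono[OF onorm[OF bounded_clinear_op_imp_bounded_linear[OF A]] norm_ge_zero])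
  finally have "S\<^sup>2 \<le> (onorm A)\<^sup>2 * (norm u)\<^sup>2 * (norm \<eta>)\<^sup>2"
    using S_nonneg by (metis power_mono power_mult_distrib)
  also have "(norm u)\<^sup>2 = S" unfolding u_def S_def by (rule norm_sum_orthonormal[OF e])
  finally have "S * S \<le> ((onorm A)\<^sup>2 * (norm \<eta>)\<^sup>2) * S" by (simp add: power2_eq_square mult_ac)
  then have "S \<le> (onorm A)\<^sup>2 * (norm \<eta>)\<^sup>2"
    using S_nonneg by (metis mult_right_le_imp_le order.order_iff_strict zero_le_mult_iff zero_le_power2)
  moreover have "cmod (cinner \<eta> (A (e j))) = cmod (t j)" for j
    by (metis t_def cinner_cnj complex_mod_cnj)
  ultimately show ?thesis by (simp add: S_def)
qed

lemma norm_sum_orthogonal: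
  assumes "finite I" "\<And>i j. i \<in> I \<Longrightarrow> j \<in> I \<Longrightarrow> i \<noteq> j \<Longrightarrow> cinner (v i) (v j) = 0"
  shows "(norm (sum v I))\<^sup>2 = (\<Sum>i\<in>I. (norm (v i))\<^sup>2)"
proof -
  have "cinner (sum v I) (sum v I) = (\<Sum>i\<in>I. \<Sum>j\<in>I. cinner (v i) (v j))"
    unfolding cinner_sum_left cinner_sum_right by (rule sum.swap)
  also have "\<dots> = (\<Sum>i\<in>I. cinner (v i) (v i))"
  proof (intro sum.cong refl)
    fix i assume "i \<in> I"
    then have "(\<Sum>j\<in>I. cinner (v i) (v j)) = (\<Sum>j\<in>I. if j = i then cinner (v i) (v i) else 0)"
      using assms(2) by (intro sum.cong refl) auto
    then show "(\<Sum>j\<in>I. cinner (v i) (v j)) = cinner (v i) (v i)" using \<open>i \<in> I\<close> assms(1) by simp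
  qed
  finally show ?thesis unfolding cinner_self of_real_sum[symmetric] of_real_eq_iff .
qed

lemma summable_orthogonal:
  fixes v :: "nat \<Rightarrow> 'a::{complex_inner,complete_space}"
  assumes "\<And>i j. i \<noteq> j \<Longrightarrow> cinner (v i) (v j) = 0" "summable (\<lambda>n. (norm (v n))\<^sup>2)"
  shows "summable v"
proof -
  have "Cauchy (\<lambda>n. \<Sum>i<n. v i)"
  proof (rule metric_CauchyI)
    fix e :: real assume "e > 0"
    then obtain N where N: "\<And>m n. m \<ge> N \<Longrightarrow> norm (\<Sum>k\<in>{m..<n}. (norm (v k))\<^sup>2) < e\<^sup>2"
      using assms(2) unfolding summable_Cauchy by (meson zero_less_power)
    have close: "dist (\<Sum>i<m. v i) (\<Sum>i<n. v i) < e" if "N \<le> m" "m \<le> n" for m n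
    proof -
      have "(dist (\<Sum>i<m. v i) (\<Sum>i<n. v i))\<^sup>2 = (norm (sum v {m..<n}))\<^sup>2"
        using that sum_diff_nat_ivl[of 0 m n v]
        by (simp add: dist_norm lessThan_atLeast0) (metis norm_minus_commute)
      also have "\<dots> = (\<Sum>k\<in>{m..<n}. (norm (v k))\<^sup>2)"
        using assms(1) by (intro norm_sum_orthogonal) auto
      also have "\<dots> < e\<^sup>2" using N[OF that(1), of n] by (simp add: sum_nonneg)
      finally show ?thesis using \<open>e > 0\<close> by (simp add: power_less_imp_less_base)
    qed
    show "\<exists>M. \<forall>m\<ge>M. \<forall>n\<ge>M. dist (\<Sum>i<m. v i) (\<Sum>i<n. v i) < e"
      by (metis close dist_commute nat_le_linear)
  qed
  then show ?thesis by (simp add: summable_iff_convergent Cauchy_convergent)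
qed

section \<open>Fock representations\<close>

text \<open>Only the parts of \<open>conjugation\<close> and \<open>fock_rep\<close> that the proof uses.\<close>

locale fock =
  fixes J :: "'l::complex_inner \<Rightarrow> 'l"
    and a ad :: "'l \<Rightarrow> 'f::{complex_inner,complete_space} \<Rightarrow> 'f"
    and vac :: 'f
  assumes J_J [simp]: "J (J f) = f"
    and cinner_J: "cinner (J f) (J g) = cinner g f"
    and a_vac [simp]: "a f vac = 0"
    and clinear_a: "clinear_on (fin_dom ad vac) (a f)"
    and clinear_ad: "clinear_on (fin_dom ad vac) (ad f)"
    and a_add: "x \<in> fin_dom ad vac \<Longrightarrow> a (f + g) x = a f x + a g x"
    and ad_add: "x \<in> fin_dom ad vac \<Longrightarrow> ad (f + g) x = ad f x + ad g x"
    and a_cscale: "x \<in> fin_dom ad vac \<Longrightarrow> a (cscale c f) x = cscale c (a f x)"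
    and ad_cscale: "x \<in> fin_dom ad vac \<Longrightarrow> ad (cscale c f) x = cscale c (ad f x)"
    and ad_ad_commute: "x \<in> fin_dom ad vac \<Longrightarrow> ad f (ad g x) = ad g (ad f x)"
    and ccr: "x \<in> fin_dom ad vac \<Longrightarrow> a f (ad g x) - ad g (a f x) = cscale (cinner (J f) g) x"
    and a_adjoint: "x \<in> fin_dom ad vac \<Longrightarrow> y \<in> fin_dom ad vac \<Longrightarrow>
      cinner (a f x) y = cinner x (ad (J f) y)"
    and clinear_a_n_part: "clinear_on (n_part ad vac n) (a f)"
    and clinear_ad_n_part: "clinear_on (n_part ad vac n) (ad f)"
    and bounded_n_part: "\<exists>K. \<forall>x\<in>n_part ad vac n. norm (a f x) \<le> K * norm x \<and> norm (ad f x) \<le> K * norm x"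
    and a_sums: "x \<in> D_alpha ad vac (1/2) \<Longrightarrow> (\<lambda>n. a f (comp ad vac n x)) sums (a f x)"
    and ad_sums: "x \<in> D_alpha ad vac (1/2) \<Longrightarrow> (\<lambda>n. ad f (comp ad vac n x)) sums (ad f x)"

lemma fock_if_fock_rep:
  assumes "conjugation J" "fock_rep J a ad vac"
  shows "fock J a ad vac"
  using assms unfolding conjugation_def fock_rep_def Let_def
  by unfold_locales simp_all

context fock
begin

lemma cmod_cinner_J: "cmod (cinner \<xi> (J f)) = cmod (cinner (J \<xi>) f)"
proof -
  have "cinner \<xi> (J f) = cnj (cinner (J \<xi>) f)"
    using cinner_J[of "J \<xi>" f] cinner_cnj[of f "J \<xi>"] by simp
  then show ?thesis by simp
qed

lemma norm_J [simp]: "norm (J f) = norm f"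
  using cinner_J[of f f] unfolding cinner_self of_real_eq_iff by (simp add: power2_eq_iff_nonneg)

abbreviation "D \<equiv> fin_dom ad vac"

abbreviation "F n \<equiv> n_part ad vac n"

definition F0 :: "nat \<Rightarrow> 'f set" where
  "F0 n = c_span {fock_vec ad vac fs | fs. length fs = n}"

lemma csubspace_D: "csubspace D"
  unfolding fin_dom_def by (rule csubspace_c_span)

lemma fock_vec_in_D: "fock_vec ad vac fs \<in> D"
  unfolding fin_dom_def by (rule c_span_superset) simp

lemma F0_subset_D: "F0 n \<subseteq> D"
  unfolding F0_def fin_dom_def by (rule c_span_mono) auto

lemma csubspace_F0: "csubspace (F0 n)"
  unfolding F0_def by (rule csubspace_c_span)

lemma fock_vec_in_F0: "fock_vec ad vac fs \<in> F0 (length fs)"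
  unfolding F0_def by (rule c_span_superset) auto

lemma F_eq_closure: "F n = closure (F0 n)"
  unfolding F0_def n_part_def ..

lemma csubspace_F: "csubspace (F n)"
  unfolding F_eq_closure by (intro csubspace_closure csubspace_F0)

lemma closed_F: "closed (F n)"
  unfolding F_eq_closure by simp

lemma F0_subset_F: "F0 n \<subseteq> F n"
  unfolding F_eq_closure by (rule closure_subset)

lemma ad_in_D:
  assumes "x \<in> D" shows "ad f x \<in> D"
proof (rule clinear_on_c_span_into[OF clinear_ad csubspace_D _ _ csubspace_D])
  show "range (fock_vec ad vac) \<subseteq> D" using fock_vec_in_D by blast
  show "ad f ` range (fock_vec ad vac) \<subseteq> D" using fock_vec_in_D[of "f # _"] by auto
  show "x \<in> c_span (range (fock_vec ad vac))" using assms by (simp add: fin_dom_def)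
qed

lemma ad_F0:
  assumes "x \<in> F0 n" shows "ad f x \<in> F0 (Suc n)"
proof (rule clinear_on_c_span_into[OF clinear_ad csubspace_D _ _ csubspace_F0])
  show "{fock_vec ad vac fs | fs. length fs = n} \<subseteq> D" using fock_vec_in_D by blast
  show "ad f ` {fock_vec ad vac fs | fs. length fs = n} \<subseteq> F0 (Suc n)"
    using fock_vec_in_F0[of "f # _"] by auto
  show "x \<in> c_span {fock_vec ad vac fs | fs. length fs = n}" using assms by (simp add: F0_def)
qed

lemma ad_zero [simp]: "ad f 0 = 0"
  using clinear_on_0[OF clinear_ad csubspace_0[OF csubspace_D]] .

lemma a_ad: "x \<in> D \<Longrightarrow> a f (ad g x) = ad g (a f x) + cscale (cinner (J f) g) x"
  using ccr[of x f g] by (simp add: algebra_simps)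

lemma a_fock_vec: "a f (fock_vec ad vac fs) \<in> F0 (length fs - 1)"
proof (induction fs)
  case Nil
  show ?case using csubspace_0[OF csubspace_F0] by simp
next
  case (Cons g fs)
  have "ad g (a f (fock_vec ad vac fs)) \<in> F0 (length fs)"
    using Cons.IH ad_F0 csubspace_0[OF csubspace_F0] by (cases fs) auto
  then show ?case
    using fock_vec_in_F0[of fs] csubspace_F0
    by (simp add: a_ad fock_vec_in_D csubspace_add csubspace_cscale)
qed

lemma a_in_D:
  assumes "x \<in> D" shows "a f x \<in> D"
proof (rule clinear_on_c_span_into[OF clinear_a csubspace_D _ _ csubspace_D])
  show "range (fock_vec ad vac) \<subseteq> D" using fock_vec_in_D by blast
  show "a f ` range (fock_vec ad vac) \<subseteq> D" using a_fock_vec F0_subset_D by blast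
  show "x \<in> c_span (range (fock_vec ad vac))" using assms by (simp add: fin_dom_def)
qed

lemma a_F0:
  assumes "x \<in> F0 n" shows "a f x \<in> F0 (n - 1)"
proof (rule clinear_on_c_span_into[OF clinear_a csubspace_D _ _ csubspace_F0])
  show "{fock_vec ad vac fs | fs. length fs = n} \<subseteq> D" using fock_vec_in_D by blast
  show "a f ` {fock_vec ad vac fs | fs. length fs = n} \<subseteq> F0 (n - 1)"
    using a_fock_vec by blast
  show "x \<in> c_span {fock_vec ad vac fs | fs. length fs = n}" using assms by (simp add: F0_def)
qed

lemma a_F0_0:
  assumes "x \<in> F0 0" shows "a f x = 0"
proof -
  have "a f x \<in> {0}"
  proof (rule clinear_on_c_span_into[OF clinear_a csubspace_D])
    show "{fock_vec ad vac fs | fs. length fs = 0} \<subseteq> D" using fock_vec_in_D by blast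
    show "a f ` {fock_vec ad vac fs | fs. length fs = 0} \<subseteq> {0}" by auto
    show "x \<in> c_span {fock_vec ad vac fs | fs. length fs = 0}" using assms by (simp add: F0_def)
  qed (simp add: csubspace_def)
  then show ?thesis by simp
qed

lemma cinner_fock_vec_F0:
  assumes "\<And>gs. length gs = m \<Longrightarrow> cinner u (fock_vec ad vac gs) = 0" "v \<in> F0 m"
  shows "cinner u v = 0"
  using assms(2) unfolding F0_def
  by (induction rule: c_span_induct) (auto simp: cinner_add_right cinner_cscale_right assms(1))

lemma cinner_fock_vec_length_ne:
  "length fs \<noteq> length gs \<Longrightarrow> cinner (fock_vec ad vac fs) (fock_vec ad vac gs) = 0"
proof (induction fs arbitrary: gs)
  case Nil
  then obtain g gs' where "gs = g # gs'" by (cases gs) auto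
  then show ?case using a_adjoint[OF fock_vec_in_D fock_vec_in_D, of "J g" "[]" gs'] by simp
next
  case (Cons f fs)
  have "cinner (fock_vec ad vac (f # fs)) (fock_vec ad vac gs)
      = cnj (cinner (a (J f) (fock_vec ad vac gs)) (fock_vec ad vac fs))"
    using a_adjoint[OF fock_vec_in_D fock_vec_in_D, of "J f" gs fs] cinner_cnj by simp
  also have "cinner (a (J f) (fock_vec ad vac gs)) (fock_vec ad vac fs) = 0"
  proof (cases gs)
    case (Cons g gs')
    then show ?thesis
      using a_fock_vec[of "J f" gs] Cons.prems
        cinner_fock_vec_F0[of "length gs'" "fock_vec ad vac fs"] Cons.IH cinner_eq_zero_sym
      by auto
  qed simp
  finally show ?case by simp
qed

lemma F0_orthogonal:
  assumes "u \<in> F0 n" "v \<in> F0 m" "n \<noteq> m"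
  shows "cinner u v = 0"
proof (rule cinner_fock_vec_F0[OF _ assms(2)])
  fix gs :: "'l list" assume "length gs = m"
  then have "cinner (fock_vec ad vac gs) u = 0"
    using assms(3) by (intro cinner_fock_vec_F0[OF _ assms(1)] cinner_fock_vec_length_ne) simp
  then show "cinner u (fock_vec ad vac gs) = 0" by (simp add: cinner_eq_zero_sym)
qed

lemma F_orthogonal:
  assumes "u \<in> F n" "v \<in> F m" "n \<noteq> m"
  shows "cinner u v = 0"
proof -
  have u: "u \<in> closure (F0 n)" and v: "v \<in> closure (F0 m)"
    using assms(1,2) by (simp_all only: F_eq_closure)
  have "cinner u w = 0" if "w \<in> F0 m" for w
    using continuous_constant_on_closure[OF linear_continuous_on[OF bounded_linear_cinner_left]
        F0_orthogonal[OF _ that assms(3)] u] .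
  then show ?thesis
    using continuous_constant_on_closure[OF linear_continuous_on[OF bounded_linear_cinner_right] _ v]
    by blast
qed

lemma continuous_on_a_F: "continuous_on (F n) (a f)"
proof -
  obtain K where "\<forall>x\<in>F n. norm (a f x) \<le> K * norm x" using bounded_n_part by blast
  then show ?thesis by (rule clinear_on_bounded_continuous_on[OF clinear_a_n_part csubspace_F])
qed

lemma continuous_on_ad_F: "continuous_on (F n) (ad f)"
proof -
  obtain K where "\<forall>x\<in>F n. norm (ad f x) \<le> K * norm x" using bounded_n_part by blast
  then show ?thesis by (rule clinear_on_bounded_continuous_on[OF clinear_ad_n_part csubspace_F])
qed

lemma a_F:
  assumes "x \<in> F (Suc n)" shows "a f x \<in> F n"
proof -
  have "a f ` F0 (Suc n) \<subseteq> F n" using a_F0[of _ "Suc n" f] F0_subset_F[of n] by auto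
  then have "a f ` closure (F0 (Suc n)) \<subseteq> F n"
    by (rule image_closure_subset[OF continuous_on_a_F[of "Suc n", unfolded F_eq_closure] closed_F])
  moreover have "x \<in> closure (F0 (Suc n))" using assms by (simp only: F_eq_closure)
  ultimately show ?thesis by blast
qed

lemma ad_F:
  assumes "x \<in> F n" shows "ad f x \<in> F (Suc n)"
proof -
  have "ad f ` F0 n \<subseteq> F (Suc n)" using ad_F0[of _ n f] F0_subset_F[of "Suc n"] by auto
  then have "ad f ` closure (F0 n) \<subseteq> F (Suc n)"
    by (rule image_closure_subset[OF continuous_on_ad_F[of n, unfolded F_eq_closure] closed_F])
  moreover have "x \<in> closure (F0 n)" using assms by (simp only: F_eq_closure)
  ultimately show ?thesis by blast
qed

lemma a_F_0:
  assumes "x \<in> F 0" shows "a f x = 0"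
proof -
  have "x \<in> closure (F0 0)" using assms by (simp only: F_eq_closure)
  with continuous_constant_on_closure[OF continuous_on_a_F[of 0 f, unfolded F_eq_closure]] a_F0_0
  show ?thesis by blast
qed

lemma adjoint_F:
  assumes u: "u \<in> F (Suc n)" and v: "v \<in> F n"
  shows "cinner u (ad g v) = cinner (a (J g) u) v"
proof -
  have on_F0: "cinner u (ad g w) - cinner (a (J g) u) w = 0" if w: "w \<in> F0 n" for w
  proof (rule continuous_constant_on_closure[of "F0 (Suc n)" "\<lambda>u. cinner u (ad g w) - cinner (a (J g) u) w"])
    show "continuous_on (closure (F0 (Suc n))) (\<lambda>u. cinner u (ad g w) - cinner (a (J g) u) w)"
      using continuous_on_a_F[of "Suc n", unfolded F_eq_closure]
      by (intro continuous_intros linear_continuous_on[OF bounded_linear_cinner_left]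
          bounded_linear.continuous_on[OF bounded_linear_cinner_left])
    show "cinner u' (ad g w) - cinner (a (J g) u') w = 0" if "u' \<in> F0 (Suc n)" for u'
    proof -
      have "u' \<in> D" "w \<in> D" using that w F0_subset_D by blast+
      then show ?thesis by (simp add: a_adjoint)
    qed
  qed (use u in \<open>simp only: F_eq_closure\<close>)
  have cont: "continuous_on (closure (F0 n)) (\<lambda>w. cinner u (ad g w) - cinner (a (J g) u) w)"
    using continuous_on_ad_F[of n, unfolded F_eq_closure]
    by (intro continuous_intros linear_continuous_on[OF bounded_linear_cinner_right]
        bounded_linear.continuous_on[OF bounded_linear_cinner_right])
  have "v \<in> closure (F0 n)" using v by (simp only: F_eq_closure)
  from continuous_constant_on_closure[OF cont on_F0 this] show ?thesis by simp
qed

lemma comp_ex1: "\<exists>!p. p \<in> F n \<and> (\<forall>y\<in>F n. cinner y (x - p) = 0)"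
  by (rule orthogonal_projection_ex1[OF csubspace_F closed_F])

lemma comp_in_F: "comp ad vac n x \<in> F n"
  and comp_orthogonal: "y \<in> F n \<Longrightarrow> cinner y (x - comp ad vac n x) = 0"
  using theI'[OF comp_ex1[of n x]] unfolding comp_def by auto

lemma comp_eqI:
  assumes "p \<in> F n" "\<And>y. y \<in> F n \<Longrightarrow> cinner y (x - p) = 0"
  shows "comp ad vac n x = p"
  unfolding comp_def by (rule the1_equality[OF comp_ex1]) (simp add: assms)

lemma cinner_comp_right: "y \<in> F n \<Longrightarrow> cinner y (comp ad vac n x) = cinner y x"
  using comp_orthogonal[of y n x] by (simp add: cinner_diff_right)

lemma cinner_comp_left:
  assumes "y \<in> F n" shows "cinner (comp ad vac n x) y = cinner x y"
proof -
  have "cinner (comp ad vac n x) y = cnj (cinner y (comp ad vac n x))" by (rule cinner_cnj)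
  also have "\<dots> = cinner x y" using cinner_comp_right[OF assms] cinner_cnj[of x y] by simp
  finally show ?thesis .
qed

subsection \<open>Annihilation operators on vectors over a finite orthonormal family\<close>

definition F0_over :: "nat \<Rightarrow> 'l set \<Rightarrow> 'f set" where
  "F0_over n W = c_span {fock_vec ad vac fs | fs. length fs = n \<and> set fs \<subseteq> W}"

lemma F0_over_subset_D: "F0_over n W \<subseteq> D"
  unfolding F0_over_def fin_dom_def by (rule c_span_mono) auto

lemma F0_orthonormal_generators:
  assumes "\<Psi> \<in> F0 n"
  obtains p w where "orthonormal w {..<p}" "\<Psi> \<in> F0_over n (fourier_span w p)"
proof -
  obtain k c v where kv: "\<forall>i<(k::nat). v i \<in> {fock_vec ad vac fs | fs. length fs = n}"
    "\<Psi> = (\<Sum>i<k. cscale (c i) (v i))"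
    using assms unfolding F0_def c_span_def by blast
  have "\<forall>i. \<exists>fs. i < k \<longrightarrow> v i = fock_vec ad vac fs \<and> length fs = n" using kv(1) by blast
  then obtain fss where fss: "\<And>i. i < k \<Longrightarrow> v i = fock_vec ad vac (fss i) \<and> length (fss i) = n"
    by metis
  obtain p w where w: "orthonormal w {..<p}"
    and exp: "set (concat (map fss [0..<k])) \<subseteq> fourier_span w p"
    using gram_schmidt by blast
  have "v i \<in> {fock_vec ad vac fs | fs. length fs = n \<and> set fs \<subseteq> fourier_span w p}" if "i < k" for i
  proof -
    have "set (fss i) \<subseteq> fourier_span w p" using exp that by (auto simp: UN_subset_iff)
    with fss[OF that] show ?thesis by blast
  qed
  then have "\<Psi> \<in> F0_over n (fourier_span w p)"
    unfolding F0_over_def kv(2) by (rule c_span_sum)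
  with w that show thesis by blast
qed

lemma a_add_sum:
  assumes "x \<in> D" shows "a (sum g A) x = (\<Sum>i\<in>A. a (g i) x)"
proof -
  have "a 0 x = 0" using a_add[OF assms, of 0 0] by simp
  then show ?thesis by (induction A rule: infinite_finite_induct) (simp_all add: a_add[OF assms])
qed

lemma ad_add_sum:
  assumes "x \<in> D" shows "ad (sum g A) x = (\<Sum>i\<in>A. ad (g i) x)"
proof -
  have "ad 0 x = 0" using ad_add[OF assms, of 0 0] by simp
  then show ?thesis by (induction A rule: infinite_finite_induct) (simp_all add: ad_add[OF assms])
qed

text \<open>The number operator restricted to the span of w_1, ..., w_p.\<close>

definition number_partial :: "(nat \<Rightarrow> 'l) \<Rightarrow> nat \<Rightarrow> 'f \<Rightarrow> 'f" where
  "number_partial w p x = (\<Sum>k<p. ad (w k) (a (J (w k)) x))"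

lemma clinear_number_partial: "clinear_on D (number_partial w p)"
  unfolding clinear_on_def number_partial_def
  by (simp add: clinear_on_add[OF clinear_a] clinear_on_add[OF clinear_ad] a_in_D sum.distrib
      clinear_on_cscale[OF clinear_a] clinear_on_cscale[OF clinear_ad] cscale_sum_right)

lemma number_partial_fock_vec:
  assumes "set fs \<subseteq> fourier_span w p"
  shows "number_partial w p (fock_vec ad vac fs) = cscale (of_nat (length fs)) (fock_vec ad vac fs)"
  using assms
proof (induction fs)
  case (Cons g fs)
  define \<Phi> where "\<Phi> = fock_vec ad vac fs"
  have \<Phi>: "\<Phi> \<in> D" by (simp add: \<Phi>_def fock_vec_in_D)
  have IH: "number_partial w p \<Phi> = cscale (of_nat (length fs)) \<Phi>"
    using Cons by (simp add: \<Phi>_def)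
  have g: "fourier_sum w p g = g" using Cons.prems by (simp add: fourier_span_def)
  have "ad (w k) (a (J (w k)) (ad g \<Phi>))
      = ad g (ad (w k) (a (J (w k)) \<Phi>)) + ad (cscale (cinner (w k) g) (w k)) \<Phi>" for k
  proof -
    have "ad (w k) (a (J (w k)) (ad g \<Phi>))
        = ad (w k) (ad g (a (J (w k)) \<Phi>)) + ad (w k) (cscale (cinner (w k) g) \<Phi>)"
      unfolding a_ad[OF \<Phi>] J_J
      by (rule clinear_on_add[OF clinear_ad]) (simp_all add: ad_in_D a_in_D \<Phi> csubspace_cscale[OF csubspace_D])
    then show ?thesis
      by (simp add: ad_ad_commute a_in_D \<Phi> clinear_on_cscale[OF clinear_ad \<Phi>] ad_cscale[OF \<Phi>])
  qed
  then have "number_partial w p (ad g \<Phi>)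
      = ad g (number_partial w p \<Phi>) + ad (fourier_sum w p g) \<Phi>"
    unfolding number_partial_def fourier_sum_def
    by (simp add: sum.distrib ad_add_sum[OF \<Phi>] a_in_D ad_in_D \<Phi>
        clinear_on_sum[OF clinear_ad csubspace_D])
  also have "\<dots> = cscale (of_nat (Suc (length fs))) (ad g \<Phi>)"
    by (simp add: IH g clinear_on_cscale[OF clinear_ad \<Phi>] cscale_add_left cscale_one)
  finally show ?case by (simp add: \<Phi>_def)
qed (simp add: number_partial_def)

lemma number_partial_F0_over:
  assumes "x \<in> F0_over n (fourier_span w p)"
  shows "number_partial w p x = cscale (of_nat n) x"
proof -
  from assms have "x \<in> D \<and> number_partial w p x = cscale (of_nat n) x"
    unfolding F0_over_def
  proof (induction rule: c_span_induct)
    case zero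
    then show ?case by (simp add: csubspace_0[OF csubspace_D] clinear_on_0[OF clinear_number_partial])
  next
    case (add x y)
    then show ?case
      by (simp add: csubspace_add[OF csubspace_D] clinear_on_add[OF clinear_number_partial]
          cscale_add_right)
  next
    case (cscale c v)
    then obtain fs where "v = fock_vec ad vac fs" "length fs = n" "set fs \<subseteq> fourier_span w p"
      by blast
    then show ?case
      by (simp add: csubspace_cscale[OF csubspace_D] fock_vec_in_D number_partial_fock_vec
          clinear_on_cscale[OF clinear_number_partial] cscale_cscale mult.commute)
  qed
  then show ?thesis ..
qed

lemma a_vanish_F0_over:
  assumes "\<forall>k<p. cinner (J h) (w k) = 0" "x \<in> F0_over n (fourier_span w p)"
  shows "a h x = 0"
proof -
  have "cinner (J h) g = 0" if "g \<in> fourier_span w p" for g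
  proof -
    have "cinner (J h) g = cinner (J h) (fourier_sum w p g)"
      using that by (simp add: fourier_span_def)
    also have "\<dots> = 0"
      using assms(1) by (simp add: fourier_sum_def cinner_sum_right cinner_cscale_right)
    finally show ?thesis .
  qed
  then have "a h (fock_vec ad vac fs) = 0" if "set fs \<subseteq> fourier_span w p" for fs
    using that by (induction fs) (auto simp: a_ad fock_vec_in_D)
  then have "a h x \<in> {0}"
    using assms(2) unfolding F0_over_def
    by (intro clinear_on_c_span_into[OF clinear_a csubspace_D _ _ _]) (auto simp: csubspace_def fock_vec_in_D)
  then show ?thesis by simp
qed

text \<open>The part of h orthogonal to all J w_k annihilates \<Psi>: it commutes with every a\<dagger>(g),
  g in the span of w, and kills the vacuum.\<close>

lemma a_expansion:
  assumes w: "orthonormal w {..<p}" and \<Psi>: "\<Psi> \<in> F0_over n (fourier_span w p)"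
  shows "a h \<Psi> = (\<Sum>k<p. cscale (cinner (J (w k)) h) (a (J (w k)) \<Psi>))"
proof -
  define r where "r = h - (\<Sum>k<p. cscale (cinner (J (w k)) h) (J (w k)))"
  have "cinner (J r) (w l) = 0" if "l < p" for l
  proof -
    have "cinner (J r) (w l) = cinner (J (w l)) r" using cinner_J[of r "J (w l)"] by simp
    also have "\<dots> = cinner (J (w l)) h - (\<Sum>k<p. cinner (J (w k)) h * cinner (w k) (w l))"
      by (simp add: r_def cinner_diff_right cinner_sum_right cinner_cscale_right cinner_J)
    also have "(\<Sum>k<p. cinner (J (w k)) h * cinner (w k) (w l))
        = (\<Sum>k<p. if k = l then cinner (J (w l)) h else 0)"
      using w that by (intro sum.cong refl) (simp add: orthonormal_def)
    also have "\<dots> = cinner (J (w l)) h" using that by simp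
    finally show ?thesis by simp
  qed
  then have "a r \<Psi> = 0" using a_vanish_F0_over[OF _ \<Psi>] by blast
  have \<Psi>_D: "\<Psi> \<in> D" using \<Psi> F0_over_subset_D by blast
  have "a h \<Psi> = a (r + (\<Sum>k<p. cscale (cinner (J (w k)) h) (J (w k)))) \<Psi>"
    by (simp add: r_def)
  also have "\<dots> = a r \<Psi> + (\<Sum>k<p. cscale (cinner (J (w k)) h) (a (J (w k)) \<Psi>))"
    by (simp add: a_add a_add_sum a_cscale \<Psi>_D)
  finally show ?thesis using \<open>a r \<Psi> = 0\<close> by simp
qed

lemma sum_norm_a_basis:
  assumes "\<Psi> \<in> F0_over n (fourier_span w p)"
  shows "(\<Sum>k<p. (norm (a (J (w k)) \<Psi>))\<^sup>2) = real n * (norm \<Psi>)\<^sup>2"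
proof -
  have \<Psi>: "\<Psi> \<in> D" using assms F0_over_subset_D by blast
  have "cinner (a (J (w k)) \<Psi>) (a (J (w k)) \<Psi>) = cinner \<Psi> (ad (w k) (a (J (w k)) \<Psi>))" for k
    using a_adjoint[OF \<Psi> a_in_D[OF \<Psi>]] by simp
  then have "complex_of_real (\<Sum>k<p. (norm (a (J (w k)) \<Psi>))\<^sup>2) = cinner \<Psi> (number_partial w p \<Psi>)"
    by (simp add: number_partial_def cinner_sum_right cinner_self)
  also have "\<dots> = complex_of_real (real n * (norm \<Psi>)\<^sup>2)"
    by (simp add: number_partial_F0_over[OF assms] cinner_cscale_right cinner_self)
  finally show ?thesis by (simp only: of_real_eq_iff)
qed

lemma sum_norm_a_F0:
  assumes \<Psi>: "\<Psi> \<in> F0 n"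
    and bessel: "\<And>\<xi>. (\<Sum>j\<in>T. (cmod (cinner \<xi> (h j)))\<^sup>2) \<le> lam * (norm \<xi>)\<^sup>2"
  shows "(\<Sum>j\<in>T. (norm (a (h j) \<Psi>))\<^sup>2) \<le> lam * (real n * (norm \<Psi>)\<^sup>2)"
proof -
  obtain p w where w: "orthonormal w {..<p}" and \<Psi>_over: "\<Psi> \<in> F0_over n (fourier_span w p)"
    using F0_orthonormal_generators[OF \<Psi>] by blast
  have Jw: "orthonormal (\<lambda>k. J (w k)) {..<p}"
    using w by (simp add: orthonormal_def cinner_J eq_commute)
  have "(\<Sum>j\<in>T. (cmod (\<Sum>k<p. cinner (J (w k)) (h j) * \<beta> k))\<^sup>2) \<le> lam * (\<Sum>k<p. (cmod (\<beta> k))\<^sup>2)"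
    for \<beta>
  proof -
    define \<xi> where "\<xi> = (\<Sum>k<p. cscale (cnj (\<beta> k)) (J (w k)))"
    have "cinner \<xi> (h j) = (\<Sum>k<p. cinner (J (w k)) (h j) * \<beta> k)" for j
      by (simp add: \<xi>_def cinner_sum_left cinner_cscale_left mult.commute)
    moreover have "(norm \<xi>)\<^sup>2 = (\<Sum>k<p. (cmod (\<beta> k))\<^sup>2)"
      unfolding \<xi>_def by (simp add: norm_sum_orthonormal[OF Jw])
    ultimately show ?thesis using bessel[of \<xi>] by simp
  qed
  then have "(\<Sum>j\<in>T. (norm (\<Sum>k<p. cscale (cinner (J (w k)) (h j)) (a (J (w k)) \<Psi>)))\<^sup>2)
      \<le> lam * (\<Sum>k<p. (norm (a (J (w k)) \<Psi>))\<^sup>2)"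
    by (rule sum_norm_combination_le)
  moreover have "(\<Sum>j\<in>T. (norm (a (h j) \<Psi>))\<^sup>2)
      = (\<Sum>j\<in>T. (norm (\<Sum>k<p. cscale (cinner (J (w k)) (h j)) (a (J (w k)) \<Psi>)))\<^sup>2)"
    by (intro sum.cong refl arg_cong[where f = "\<lambda>x. (norm x)\<^sup>2"] a_expansion[OF w \<Psi>_over])
  ultimately show ?thesis by (simp add: sum_norm_a_basis[OF \<Psi>_over])
qed

lemma sum_norm_a_F:
  assumes \<Psi>: "\<Psi> \<in> F n"
    and bessel: "\<And>\<xi>. (\<Sum>j\<in>T. (cmod (cinner \<xi> (h j)))\<^sup>2) \<le> lam * (norm \<xi>)\<^sup>2"
  shows "(\<Sum>j\<in>T. (norm (a (h j) \<Psi>))\<^sup>2) \<le> lam * (real n * (norm \<Psi>)\<^sup>2)"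
proof -
  define g where "g \<Psi> = lam * (real n * (norm \<Psi>)\<^sup>2) - (\<Sum>j\<in>T. (norm (a (h j) \<Psi>))\<^sup>2)" for \<Psi>
  have "continuous_on (closure (F0 n)) g"
    unfolding g_def using continuous_on_a_F[of n, unfolded F_eq_closure]
    by (intro continuous_intros) auto
  moreover have "g ` F0 n \<subseteq> {0..}"
    using sum_norm_a_F0[OF _ bessel] by (auto simp: g_def)
  ultimately have "g ` closure (F0 n) \<subseteq> {0..}"
    by (rule image_closure_subset[OF _ closed_atLeast])
  moreover have "\<Psi> \<in> closure (F0 n)" using \<Psi> by (simp only: F_eq_closure)
  ultimately show ?thesis by (auto simp: g_def)
qed

subsection \<open>Action on the domains \<open>D\<^sub>\<alpha>\<close>\<close>

lemma mem_D_alpha_1: "x \<in> D_alpha ad vac 1 \<longleftrightarrow> summable (\<lambda>n. (real n + 1)\<^sup>2 * (norm (comp ad vac n x))\<^sup>2)"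
  unfolding D_alpha_def by simp

lemma mem_D_alpha_half: "x \<in> D_alpha ad vac (1/2) \<longleftrightarrow> summable (\<lambda>n. (real n + 1) * (norm (comp ad vac n x))\<^sup>2)"
  unfolding D_alpha_def by simp

lemma D_alpha_1_imp_half: "x \<in> D_alpha ad vac 1 \<Longrightarrow> x \<in> D_alpha ad vac (1/2)"
  unfolding mem_D_alpha_1 mem_D_alpha_half
  by (erule summable_comparison_test'[where N = 0]) (simp add: power2_eq_square mult_right_mono)

lemma norm_a_F_le:
  assumes "\<Psi> \<in> F n"
  shows "(norm (a h \<Psi>))\<^sup>2 \<le> (norm h)\<^sup>2 * (real n * (norm \<Psi>)\<^sup>2)"
proof -
  have "(\<Sum>j\<in>{()}. (cmod (cinner \<xi> h))\<^sup>2) \<le> (norm h)\<^sup>2 * (norm \<xi>)\<^sup>2" for \<xi>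
  proof -
    have "(cmod (cinner \<xi> h))\<^sup>2 \<le> (norm \<xi> * norm h)\<^sup>2"
      by (rule power_mono[OF cauchy_schwarz_cinner norm_ge_zero])
    then show ?thesis by (simp add: power_mult_distrib mult.commute)
  qed
  from sum_norm_a_F[OF assms this] show ?thesis by simp
qed

lemma comp_a:
  assumes "\<Phi> \<in> D_alpha ad vac (1/2)"
  shows "comp ad vac m (a h \<Phi>) = a h (comp ad vac (Suc m) \<Phi>)"
proof (rule comp_eqI)
  define p where "p = a h (comp ad vac (Suc m) \<Phi>)"
  show "a h (comp ad vac (Suc m) \<Phi>) \<in> F m" by (rule a_F[OF comp_in_F])
  fix z assume z: "z \<in> F m"
  have "cinner z (a h (comp ad vac n \<Phi>)) = (if n = Suc m then cinner z p else 0)" for n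
  proof (cases n)
    case (Suc k)
    have "a h (comp ad vac (Suc k) \<Phi>) \<in> F k" by (rule a_F[OF comp_in_F])
    then show ?thesis using F_orthogonal[OF z] Suc by (cases "k = m") (auto simp: p_def)
  qed (simp add: a_F_0[OF comp_in_F])
  then have "(\<lambda>n. cinner z (a h (comp ad vac n \<Phi>))) sums cinner z p"
    using sums_single[of "Suc m" "\<lambda>_. cinner z p"] by simp
  moreover have "(\<lambda>n. cinner z (a h (comp ad vac n \<Phi>))) sums cinner z (a h \<Phi>)"
    by (rule sums_cinner_right[OF a_sums[OF assms]])
  ultimately have "cinner z (a h \<Phi>) = cinner z p"
    using sums_unique2 by blast
  then show "cinner z (a h \<Phi> - a h (comp ad vac (Suc m) \<Phi>)) = 0"
    by (simp add: cinner_diff_right p_def)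
qed

lemma a_D_alpha_1_in_half:
  assumes "\<Phi> \<in> D_alpha ad vac 1"
  shows "a h \<Phi> \<in> D_alpha ad vac (1/2)"
proof -
  define c where "c n = (norm (comp ad vac n \<Phi>))\<^sup>2" for n
  have bound: "norm ((real m + 1) * (norm (comp ad vac m (a h \<Phi>)))\<^sup>2)
      \<le> (norm h)\<^sup>2 * ((real (Suc m) + 1)\<^sup>2 * c (Suc m))" for m
  proof -
    have "norm ((real m + 1) * (norm (comp ad vac m (a h \<Phi>)))\<^sup>2)
        = (real m + 1) * (norm (comp ad vac m (a h \<Phi>)))\<^sup>2" by simp
    also have "\<dots>
        \<le> (real m + 1) * ((norm h)\<^sup>2 * (real (Suc m) * c (Suc m)))"
      unfolding comp_a[OF D_alpha_1_imp_half[OF assms]] c_def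
      by (rule mult_left_mono[OF norm_a_F_le[OF comp_in_F]]) simp
    also have "\<dots> = (norm h)\<^sup>2 * ((real (Suc m))\<^sup>2 * c (Suc m))"
      by (simp add: power2_eq_square algebra_simps)
    also have "\<dots> \<le> (norm h)\<^sup>2 * ((real (Suc m) + 1)\<^sup>2 * c (Suc m))"
      by (rule mult_left_mono[OF mult_right_mono[OF power_mono]]) (auto simp: c_def)
    finally show ?thesis .
  qed
  have "summable (\<lambda>m. (real m + 1)\<^sup>2 * c m)"
    using assms by (simp add: mem_D_alpha_1 c_def)
  then have summ: "summable (\<lambda>m. (norm h)\<^sup>2 * ((real (Suc m) + 1)\<^sup>2 * c (Suc m)))"
    by (intro summable_mult) (subst summable_Suc_iff)
  show ?thesis
    unfolding mem_D_alpha_half by (rule summable_comparison_test'[OF summ bound])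
qed

lemma cinner_ad_a_sums:
  assumes "\<Phi> \<in> D_alpha ad vac 1"
  shows "(\<lambda>m. complex_of_real ((norm (a (J g) (comp ad vac (Suc m) \<Phi>)))\<^sup>2))
    sums cinner \<Phi> (ad g (a (J g) \<Phi>))"
proof -
  define \<Psi> where "\<Psi> = a (J g) \<Phi>"
  have "(\<lambda>m. cinner \<Phi> (ad g (comp ad vac m \<Psi>))) sums cinner \<Phi> (ad g \<Psi>)"
    unfolding \<Psi>_def by (rule sums_cinner_right[OF ad_sums[OF a_D_alpha_1_in_half[OF assms]]])
  moreover have "cinner \<Phi> (ad g (comp ad vac m \<Psi>))
      = complex_of_real ((norm (a (J g) (comp ad vac (Suc m) \<Phi>)))\<^sup>2)" for m
  proof -
    define u where "u = comp ad vac (Suc m) \<Phi>"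
    have u: "u \<in> F (Suc m)" and au: "a (J g) u \<in> F m" by (simp_all add: u_def comp_in_F a_F)
    have "cinner \<Phi> (ad g (comp ad vac m \<Psi>)) = cinner \<Phi> (ad g (a (J g) u))"
      by (simp add: \<Psi>_def u_def comp_a[OF D_alpha_1_imp_half[OF assms]])
    also have "\<dots> = cinner u (ad g (a (J g) u))"
      using cinner_comp_left[OF ad_F[OF au], of \<Phi>] by (simp add: u_def)
    also have "\<dots> = cinner (a (J g) u) (a (J g) u)" by (rule adjoint_F[OF u au])
    finally show ?thesis by (simp add: cinner_self u_def)
  qed
  ultimately show ?thesis by (simp add: \<Psi>_def)
qed

lemma cinner_numop_sums:
  assumes "\<Phi> \<in> D_alpha ad vac 1"
  shows "(\<lambda>n. complex_of_real (real n * (norm (comp ad vac n \<Phi>))\<^sup>2)) sums cinner \<Phi> (numop ad vac \<Phi>)"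
proof -
  have "summable (\<lambda>n. cscale (of_nat n) (comp ad vac n \<Phi>))"
  proof (rule summable_orthogonal)
    show "cinner (cscale (of_nat i) (comp ad vac i \<Phi>)) (cscale (of_nat j) (comp ad vac j \<Phi>)) = 0"
      if "i \<noteq> j" for i j
      using F_orthogonal[OF comp_in_F comp_in_F that] by (simp add: cinner_cscale_left cinner_cscale_right)
    have "summable (\<lambda>n. (real n + 1)\<^sup>2 * (norm (comp ad vac n \<Phi>))\<^sup>2)"
      using assms by (simp add: mem_D_alpha_1)
    moreover have "norm ((norm (cscale (of_nat n) (comp ad vac n \<Phi>)))\<^sup>2)
        \<le> (real n + 1)\<^sup>2 * (norm (comp ad vac n \<Phi>))\<^sup>2" for n
      by (simp add: norm_cscale power_mult_distrib mult_right_mono power_mono)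
    ultimately show "summable (\<lambda>n. (norm (cscale (of_nat n) (comp ad vac n \<Phi>)))\<^sup>2)"
      by (rule summable_comparison_test')
  qed
  then have "(\<lambda>n. cinner \<Phi> (cscale (of_nat n) (comp ad vac n \<Phi>))) sums cinner \<Phi> (numop ad vac \<Phi>)"
    unfolding numop_def by (rule sums_cinner_right[OF summable_sums])
  moreover have "cinner \<Phi> (cscale (of_nat n) (comp ad vac n \<Phi>))
      = complex_of_real (real n * (norm (comp ad vac n \<Phi>))\<^sup>2)" for n
    using cinner_comp_left[OF comp_in_F, of n \<Phi> \<Phi>] by (simp add: cinner_cscale_right cinner_self)
  ultimately show ?thesis by simp
qed

lemma sum_cinner_ad_a_le_numop:
  assumes \<Phi>: "\<Phi> \<in> D_alpha ad vac 1"
    and bessel: "\<And>\<xi>. (\<Sum>j\<in>T. (cmod (cinner \<xi> (J (g j))))\<^sup>2) \<le> lam * (norm \<xi>)\<^sup>2"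
  shows "(\<Sum>j\<in>T. cinner \<Phi> (ad (g j) (a (J (g j)) \<Phi>)))
    \<le> complex_of_real lam * cinner \<Phi> (numop ad vac \<Phi>)"
proof -
  define s where "s j = Re (cinner \<Phi> (ad (g j) (a (J (g j)) \<Phi>)))" for j
  define N where "N = Re (cinner \<Phi> (numop ad vac \<Phi>))"
  define c where "c n = (norm (comp ad vac n \<Phi>))\<^sup>2" for n
  note terms = sums_complex_of_real[OF cinner_ad_a_sums[OF \<Phi>]]
  note number = sums_complex_of_real[OF cinner_numop_sums[OF \<Phi>]]
  have "(\<lambda>m. \<Sum>j\<in>T. (norm (a (J (g j)) (comp ad vac (Suc m) \<Phi>)))\<^sup>2) sums (\<Sum>j\<in>T. s j)"
    unfolding s_def by (intro sums_sum terms(1))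
  moreover have "(\<lambda>n. real n * c n) sums N" using number(1) by (simp add: N_def c_def)
  then have "(\<lambda>m. real (Suc m) * c (Suc m)) sums N" using sums_Suc_iff[of "\<lambda>n. real n * c n" N] by simp
  then have "(\<lambda>m. lam * (real (Suc m) * c (Suc m))) sums (lam * N)" by (rule sums_mult)
  moreover have "(\<Sum>j\<in>T. (norm (a (J (g j)) (comp ad vac (Suc m) \<Phi>)))\<^sup>2)
      \<le> lam * (real (Suc m) * c (Suc m))" for m
    unfolding c_def by (rule sum_norm_a_F[OF comp_in_F bessel])
  ultimately have "(\<Sum>j\<in>T. s j) \<le> lam * N" by (rule sums_le[rotated 1])
  moreover have "cinner \<Phi> (ad (g j) (a (J (g j)) \<Phi>)) = complex_of_real (s j)" for j
    using terms(2) by (simp add: s_def)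
  moreover have "cinner \<Phi> (numop ad vac \<Phi>) = complex_of_real N"
    using number(2) by (simp add: N_def)
  ultimately show ?thesis by (simp add: less_eq_complex_def)
qed

end

theorem lemma4p5:
  fixes J :: "'l::{complex_inner,complete_space} \<Rightarrow> 'l"
    and A :: "'l \<Rightarrow> 'l"
    and e :: "nat \<Rightarrow> 'l"
    and a ad :: "'l \<Rightarrow> 'f::{complex_inner,complete_space} \<Rightarrow> 'f"
    and vac :: 'f
    and M :: nat
    and \<Phi> :: 'f
  assumes "conjugation J"
    and "fock_rep J a ad vac"
    and "bounded_clinear_op A"
    and "complete_ons e"
    and "\<Phi> \<in> D_alpha ad vac 1"
  shows "(\<Sum>j=1..M. cinner \<Phi> (ad (A (e j)) (a ((\<lambda>x. J (A (J x))) (J (e j))) \<Phi>)))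
           \<le> complex_of_real ((onorm A)\<^sup>2) * cinner \<Phi> (numop ad vac \<Phi>)"
proof -
  interpret fock J a ad vac using assms(1,2) by (rule fock_if_fock_rep)
  have "orthonormal e {1..M}"
    using assms(4) by (simp add: complete_ons_def orthonormal_def)
  then have "(\<Sum>j\<in>{1..M}. (cmod (cinner \<xi> (J (A (e j)))))\<^sup>2) \<le> (onorm A)\<^sup>2 * (norm \<xi>)\<^sup>2" for \<xi>
    using bessel_bounded_clinear_op[OF assms(3), of e "{1..M}" "J \<xi>"] by (simp add: cmod_cinner_J)
  from sum_cinner_ad_a_le_numop[OF assms(5) this] show ?thesis by simp
qed

end
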